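(* With $G_d$ and $g_d$ as defined below, for all $(\mathbf{x},k)\in\mathbb{R}^d\times\mathbb{R}$, $$G_d(\mathbf{x},k)=\int_{\mathbb{R}^d}(|\mathbf{x}\cdot\mathbf{w}|-|k|)^+g_d(\mathbf{w})\,d\mathbf{w}.$$
   Context: $G_d(\mathbf{x},k)=\mathbf{1}_{\mathbf{x}\neq\mathbf 0}|\mathbf{x}|e^{-k^2/|\mathbf{x}|^2}$ for $(\mathbf{x},k)\in\mathbb{R}^d\times\mathbb{R}$, and $g_d(\mathbf{w})=-\frac{\sqrt\pi}{2}\mathcal{F}^{-1}_{\mathbf{x}}\big[|\mathbf{x}|^2e^{-|\mathbf{x}|^2/4}\big](\mathbf{w})$, where $\mathcal{F}^{-1}f(\mathbf{w})=(2\pi)^{-d}\int f(\mathbf{x})e^{i\mathbf{w}\cdot\mathbf{x}}d\mathbf{x}$. *)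

theory Defs
  imports "HOL-Analysis.Analysis"
begin

definition inv_fourier :: "('a::euclidean_space \<Rightarrow> complex) \<Rightarrow> 'a \<Rightarrow> complex" where
  "inv_fourier f w = complex_of_real ((2 * pi) powr (- real DIM('a))) *
     (LINT x|lborel. f x * exp (\<i> * complex_of_real (w \<bullet> x)))"

definition G_d :: "'a::euclidean_space \<Rightarrow> real \<Rightarrow> real" where
  "G_d x k = (if x \<noteq> 0 then norm x * exp (- (k^2) / (norm x)^2) else 0)"

definition g_d :: "'a::euclidean_space \<Rightarrow> complex" where
  "g_d w = - complex_of_real (sqrt pi / 2) *
     inv_fourier (\<lambda>y::'a. complex_of_real ((norm y) ^ 2 * exp (- ((norm y) ^ 2) / 4))) w"

end

theory Submission
  imports Defs "HOL-Probability.Probability" "HOL-Real_Asymp.Real_Asymp"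
    "HOL-Computational_Algebra.Polynomial"
begin

text \<open>The Fourier transforms of \<open>e^{-|y|\<^sup>2}\<close> and \<open>|y|\<^sup>2 e^{-|y|\<^sup>2}\<close> on \<open>\<real>\<^sup>d\<close> factor over
  an orthonormal basis into one-dimensional Gaussian integrals; this gives
  \<open>g\<^sub>d(w) = (\<surd>\<pi> / 2) \<pi>^(-d/2) (4|w|\<^sup>2 - 2d) e^{-|w|\<^sup>2}\<close>.
  For \<open>x \<noteq> 0\<close> and \<open>\<sigma> = |x|\<close>, the push-forwards of \<open>e^{-|w|\<^sup>2} dw\<close> and \<open>|w|\<^sup>2 e^{-|w|\<^sup>2} dw\<close>
  under \<open>w \<mapsto> x \<bullet> w\<close> are again Gaussian-type densities on the line; they are identified
  through their characteristic functions (Levy's uniqueness theorem). The integral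
  thus collapses to \<open>(2\<sigma>)^(-1) \<integral> max 0 (|s| - |k|) (4s\<^sup>2/\<sigma>\<^sup>2 - 2) e^{-s\<^sup>2/\<sigma>\<^sup>2} ds\<close>, and
  \<open>-(2s(s - |k|) + \<sigma>\<^sup>2) e^{-s\<^sup>2/\<sigma>\<^sup>2}\<close> is an antiderivative of the integrand on \<open>s > |k|\<close>,
  which yields \<open>2\<sigma>\<^sup>2 e^{-k\<^sup>2/\<sigma>\<^sup>2}\<close>.\<close>

section \<open>Fourier integrals of real functions\<close>

definition fourier_integral :: "('a::euclidean_space \<Rightarrow> real) \<Rightarrow> 'a \<Rightarrow> complex" where
  "fourier_integral f v = (LINT y|lborel. complex_of_real (f y) * exp (\<i> * complex_of_real (v \<bullet> y)))"

lemma integrable_fourier_integrand: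
  fixes f :: "'a::euclidean_space \<Rightarrow> real"
  assumes "integrable lborel f"
  shows "integrable lborel (\<lambda>y. complex_of_real (f y) * exp (\<i> * complex_of_real (v \<bullet> y)))"
proof (rule Bochner_Integration.integrable_bound[OF assms])
  have [measurable]: "f \<in> borel_measurable borel"
    using borel_measurable_integrable[OF assms] by simp
  show "(\<lambda>y. complex_of_real (f y) * exp (\<i> * complex_of_real (v \<bullet> y))) \<in> borel_measurable lborel"
    by measurable
qed (simp add: norm_mult)

lemma fourier_integral_cmult:
  "fourier_integral (\<lambda>y. c * f y) v = complex_of_real c * fourier_integral f v"
  by (simp add: fourier_integral_def mult.assoc)

lemma fourier_integral_lincomb:
  fixes f g :: "'a::euclidean_space \<Rightarrow> real"
  assumes "integrable lborel f" "integrable lborel g"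
  shows "fourier_integral (\<lambda>y. \<alpha> * f y + \<beta> * g y) v
    = complex_of_real \<alpha> * fourier_integral f v + complex_of_real \<beta> * fourier_integral g v"
proof -
  have "(\<lambda>y. complex_of_real (\<alpha> * f y + \<beta> * g y) * exp (\<i> * complex_of_real (v \<bullet> y)))
    = (\<lambda>y. complex_of_real \<alpha> * (complex_of_real (f y) * exp (\<i> * complex_of_real (v \<bullet> y)))
         + complex_of_real \<beta> * (complex_of_real (g y) * exp (\<i> * complex_of_real (v \<bullet> y))))"
    by (simp add: fun_eq_iff algebra_simps)
  then show ?thesis
    unfolding fourier_integral_def
    using assms[THEN integrable_fourier_integrand[where v = v]] by simp
qed

lemma fourier_integral_sum:
  fixes f :: "'b \<Rightarrow> 'a::euclidean_space \<Rightarrow> real"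
  assumes "\<And>c. c \<in> C \<Longrightarrow> integrable lborel (f c)"
  shows "fourier_integral (\<lambda>y. \<Sum>c\<in>C. f c y) v = (\<Sum>c\<in>C. fourier_integral (f c) v)"
  unfolding fourier_integral_def of_real_sum sum_distrib_right
  by (intro Bochner_Integration.integral_sum integrable_fourier_integrand assms)

lemma fourier_integral_zero: "fourier_integral f 0 = complex_of_real (integral\<^sup>L lborel f)"
  by (simp add: fourier_integral_def)

lemma inv_fourier_of_real:
  "inv_fourier (\<lambda>y. complex_of_real (f y)) w
    = complex_of_real ((2 * pi) powr (- real DIM('a))) * fourier_integral f (w :: 'a::euclidean_space)"
  unfolding inv_fourier_def fourier_integral_def ..

section \<open>Gaussian integrals on the real line\<close>

lemma exp_neg_sq_eq_normal_density:
  fixes a u :: real assumes a: "0 < a"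
  shows "exp (- a * u\<^sup>2) = sqrt (pi / a) * normal_density 0 (1 / sqrt (2 * a)) u"
proof -
  have s: "(1 / sqrt (2 * a))\<^sup>2 = 1 / (2 * a)" using a by (simp add: power_divide)
  have "sqrt (pi / a) * (1 / sqrt (2 * pi * (1 / (2 * a)))) = 1"
    using a by (simp add: real_sqrt_divide field_simps)
  moreover have "- (u\<^sup>2) / (2 * (1 / (2 * a))) = - a * u\<^sup>2" using a by (simp add: field_simps)
  ultimately show ?thesis unfolding normal_density_def s using a by simp
qed

lemma integrable_power_gauss:
  fixes a :: real assumes a: "0 < a"
  shows "integrable lborel (\<lambda>u. u ^ k * exp (- a * u\<^sup>2))"
proof -
  have "integrable lborel (\<lambda>u. sqrt (pi / a) * (normal_density 0 (1 / sqrt (2 * a)) u * (u - 0) ^ k))"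
    using integrable_normal_moment[where \<sigma>="1 / sqrt (2 * a)" and \<mu>=0 and k=k] a by simp
  then show ?thesis by (subst exp_neg_sq_eq_normal_density[OF a]) (simp add: mult_ac)
qed

lemma integrable_poly_gauss:
  fixes a :: real assumes a: "0 < a"
  shows "integrable lborel (\<lambda>u. poly p u * exp (- a * u\<^sup>2))"
  unfolding poly_altdef sum_distrib_right mult.assoc
  by (intro Bochner_Integration.integrable_sum integrable_mult_right integrable_power_gauss[OF a])

lemma integrable_poly_gauss_mult:
  fixes F :: "real \<Rightarrow> real"
  assumes a: "0 < a" and [measurable]: "F \<in> borel_measurable borel"
    and F_bound: "\<And>s. \<bar>F s\<bar> \<le> C * (1 + s\<^sup>2)"
  shows "integrable lborel (\<lambda>s. poly p s * exp (- a * s\<^sup>2) * F s)"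
proof (rule Bochner_Integration.integrable_bound)
  show "integrable lborel (\<lambda>s. C * \<bar>poly (p * [:1, 0, 1:]) s * exp (- a * s\<^sup>2)\<bar>)"
    by (intro integrable_mult_right integrable_abs integrable_poly_gauss[OF a])
  show "AE s in lborel. norm (poly p s * exp (- a * s\<^sup>2) * F s)
      \<le> norm (C * \<bar>poly (p * [:1, 0, 1:]) s * exp (- a * s\<^sup>2)\<bar>)"
  proof (rule AE_I2)
    fix s
    have "norm (poly p s * exp (- a * s\<^sup>2) * F s) = \<bar>poly p s\<bar> * exp (- a * s\<^sup>2) * \<bar>F s\<bar>"
      by (simp add: abs_mult)
    also have "\<dots> \<le> \<bar>poly p s\<bar> * exp (- a * s\<^sup>2) * (C * (1 + s\<^sup>2))"
      by (intro mult_left_mono F_bound) simp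
    also have "\<dots> = C * \<bar>poly (p * [:1, 0, 1:]) s * exp (- a * s\<^sup>2)\<bar>"
    proof -
      have "poly (p * [:1, 0, 1:]) s = poly p s * (1 + s\<^sup>2)"
        by (simp add: algebra_simps power2_eq_square)
      moreover have "\<bar>1 + s\<^sup>2\<bar> = 1 + s\<^sup>2"
        by simp
      ultimately show ?thesis
        by (simp add: abs_mult mult_ac)
    qed
    also have "\<dots> \<le> norm (C * \<bar>poly (p * [:1, 0, 1:]) s * exp (- a * s\<^sup>2)\<bar>)"
      by simp
    finally show "norm (poly p s * exp (- a * s\<^sup>2) * F s) \<le> norm (C * \<bar>poly (p * [:1, 0, 1:]) s * exp (- a * s\<^sup>2)\<bar>)" .
  qed
  have [measurable]: "poly p \<in> borel_measurable borel"
    by (intro borel_measurable_continuous_onI continuous_intros)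
  show "(\<lambda>s. poly p s * exp (- a * s\<^sup>2) * F s) \<in> borel_measurable lborel"
    by measurable
qed

lemma fourier_integral_gauss:
  fixes a t :: real assumes a: "0 < a"
  shows "fourier_integral (\<lambda>u. exp (- a * u\<^sup>2)) t
       = complex_of_real (sqrt (pi / a) * exp (- (t\<^sup>2) / (4 * a)))"
proof -
  define c where "c = 1 / sqrt (2 * a)"
  have c: "c > 0" "c\<^sup>2 = 1 / (2 * a)" using a by (auto simp: c_def power_divide)
  have std_normal: "complex_of_real (exp (- a * (0 + c * x)\<^sup>2)) * exp (\<i> * complex_of_real (t * (0 + c * x)))
      = complex_of_real (sqrt (2 * pi)) * (std_normal_density x *\<^sub>R exp (\<i> * complex_of_real ((t * c) * x)))" for x
  proof -
    have "- a * (0 + c * x)\<^sup>2 = - (x\<^sup>2) / 2" using c a by (simp add: field_simps)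
    then show ?thesis by (simp add: std_normal_density_def scaleR_conv_of_real mult_ac)
  qed
  have char: "(LINT x|lborel. std_normal_density x *\<^sub>R exp (\<i> * complex_of_real (s * x)))
      = complex_of_real (exp (- (s\<^sup>2) / 2))" for s
  proof -
    have "char std_normal_distribution s = complex_of_real (exp (- (s\<^sup>2) / 2))"
      by (simp add: char_std_normal_distribution)
    then show ?thesis unfolding char_def by (subst (asm) integral_density) auto
  qed
  have "fourier_integral (\<lambda>u. exp (- a * u\<^sup>2)) t
     = \<bar>c\<bar> *\<^sub>R (LINT x|lborel. complex_of_real (exp (- a * (0 + c * x)\<^sup>2)) * exp (\<i> * complex_of_real (t * (0 + c * x))))"
    unfolding fourier_integral_def inner_real_def
    by (rule lborel_integral_real_affine) (use c in auto)
  also have "\<dots> = c *\<^sub>R (complex_of_real (sqrt (2 * pi)) * complex_of_real (exp (- ((t * c)\<^sup>2) / 2)))"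
    unfolding std_normal integral_mult_right_zero char using c by simp
  also have "\<dots> = complex_of_real (sqrt (pi / a) * exp (- (t\<^sup>2) / (4 * a)))"
  proof -
    have "c * sqrt (2 * pi) = sqrt (pi / a)" using a
      by (simp add: c_def real_sqrt_divide real_sqrt_mult field_simps)
    moreover have "(t * c)\<^sup>2 / 2 = t\<^sup>2 / (4 * a)" using c a by (simp add: field_simps)
    ultimately show ?thesis by (simp add: scaleR_conv_of_real mult_ac) (metis of_real_mult)
  qed
  finally show ?thesis .
qed

lemma lborel_integral_derivative_eq_zero:
  fixes F f :: "real \<Rightarrow> complex"
  assumes "\<And>u. (F has_vector_derivative f u) (at u)" and "\<And>u. isCont f u"
    and "integrable lborel f" and "(F \<longlongrightarrow> 0) at_top" and "(F \<longlongrightarrow> 0) at_bot"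
  shows "integral\<^sup>L lborel f = 0"
proof -
  have "(LBINT u=-\<infinity>..\<infinity>. f u) = 0 - 0"
    by (rule interval_integral_FTC_integrable)
       (use assms in \<open>auto simp: ereal_tendsto_simps1 set_integrable_def\<close>)
  then show ?thesis
    by (simp add: interval_lebesgue_integral_def set_lebesgue_integral_def)
qed

lemma has_vector_derivative_cis_linear:
  "((\<lambda>u. exp (\<i> * complex_of_real (t * u))) has_vector_derivative
     \<i> * complex_of_real t * exp (\<i> * complex_of_real (t * u))) (at u)"
proof -
  have "((\<lambda>z. exp (\<i> * of_real t * z)) has_field_derivative \<i> * of_real t * exp (\<i> * of_real t * of_real u))
      (at (of_real u))"
    by (auto intro!: derivative_eq_intros)
  from has_vector_derivative_real_field[OF this] show ?thesis by (simp add: mult_ac)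
qed

text \<open>Integration by parts: the derivative of \<open>u\<^sup>k e^{-a u\<^sup>2} e^{i t u}\<close> integrates to zero.
  For \<open>k = 0\<close> the junk term \<open>I (0 - 1)\<close> carries the factor \<open>0\<close>.\<close>
lemma fourier_integral_gauss_moment_recurrence:
  fixes a t :: real assumes a: "0 < a"
  defines "I \<equiv> \<lambda>k. fourier_integral (\<lambda>u. u ^ k * exp (- a * u\<^sup>2)) t"
  shows "of_nat k * I (k - 1) - 2 * complex_of_real a * I (Suc k) + \<i> * complex_of_real t * I k = 0"
proof -
  define P where "P = (\<lambda>k u. complex_of_real (u ^ k * exp (- a * u\<^sup>2)) * exp (\<i> * complex_of_real (t * u)))"
  have I_P: "I k = integral\<^sup>L lborel (P k)" for k
    unfolding I_def P_def fourier_integral_def inner_real_def ..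
  have int: "integrable lborel (P k)" for k
    using integrable_fourier_integrand[OF integrable_power_gauss[OF a], of k t]
    unfolding P_def inner_real_def .
  have cont: "isCont (P k) u" for k u
    unfolding P_def by (intro continuous_intros)
  have lim: "(P k \<longlongrightarrow> 0) at_top" "(P k \<longlongrightarrow> 0) at_bot"
  proof -
    have norm_P: "norm (P k u) = \<bar>u\<bar> ^ k * exp (- a * u\<^sup>2)" for u
      by (simp add: P_def norm_mult norm_power)
    have "((\<lambda>u. \<bar>u\<bar> ^ k * exp (- a * u\<^sup>2)) \<longlongrightarrow> 0) at_top"
         "((\<lambda>u. \<bar>u\<bar> ^ k * exp (- a * u\<^sup>2)) \<longlongrightarrow> 0) at_bot"
      using a by real_asymp+
    then show "(P k \<longlongrightarrow> 0) at_top" "(P k \<longlongrightarrow> 0) at_bot"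
      by (subst tendsto_norm_zero_iff[symmetric], simp add: norm_P)+
  qed
  have deriv: "(P k has_vector_derivative
      of_nat k * P (k - 1) u - 2 * complex_of_real a * P (Suc k) u + \<i> * complex_of_real t * P k u) (at u)"
    for u
  proof -
    have "((\<lambda>u. u ^ k * exp (- a * u\<^sup>2)) has_real_derivative
        of_nat k * u ^ (k - 1) * exp (- a * u\<^sup>2) - 2 * a * u ^ Suc k * exp (- a * u\<^sup>2)) (at u)"
      by (rule DERIV_cong, (auto intro!: derivative_eq_intros)[1]) (simp add: algebra_simps)
    from has_vector_derivative_mult[OF has_vector_derivative_of_real[OF this] has_vector_derivative_cis_linear[of t u]]
    show ?thesis unfolding P_def by (simp add: algebra_simps)
  qed
  have "integral\<^sup>L lborel
      (\<lambda>u. of_nat k * P (k - 1) u - 2 * complex_of_real a * P (Suc k) u + \<i> * complex_of_real t * P k u) = 0"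
    by (rule lborel_integral_derivative_eq_zero[OF deriv])
       (intro continuous_intros cont int lim Bochner_Integration.integrable_add
          Bochner_Integration.integrable_diff integrable_mult_right)+
  then show ?thesis
    unfolding I_P by (simp add: int)
qed

lemma fourier_integral_sq_gauss:
  fixes a t :: real assumes a: "0 < a"
  shows "fourier_integral (\<lambda>u. u\<^sup>2 * exp (- a * u\<^sup>2)) t
       = complex_of_real (sqrt (pi / a) * exp (- (t\<^sup>2) / (4 * a)) * (1 / (2 * a) - t\<^sup>2 / (4 * a\<^sup>2)))"
proof -
  define I where "I k = fourier_integral (\<lambda>u. u ^ k * exp (- a * u\<^sup>2)) t" for k
  have a0: "complex_of_real a \<noteq> 0" using a by simp
  have "- 2 * complex_of_real a * I 1 + \<i> * complex_of_real t * I 0 = 0"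
    using fourier_integral_gauss_moment_recurrence[OF a, of 0 t] by (simp add: I_def)
  then have I1: "I 1 = \<i> * complex_of_real t * I 0 / (2 * complex_of_real a)"
    using a0 by (simp add: field_simps)
  have "I 0 - 2 * complex_of_real a * I 2 + \<i> * complex_of_real t * I 1 = 0"
    using fourier_integral_gauss_moment_recurrence[OF a, of 1 t] by (simp add: I_def numeral_2_eq_2)
  then have "I 2 = (I 0 + \<i> * complex_of_real t * I 1) / (2 * complex_of_real a)"
    using a0 by (simp add: field_simps)
  also have "\<dots> = I 0 * complex_of_real (1 / (2 * a) - t\<^sup>2 / (4 * a\<^sup>2))"
    unfolding I1 using a0 by (simp add: field_simps power2_eq_square)
  finally have "I 2 = I 0 * complex_of_real (1 / (2 * a) - t\<^sup>2 / (4 * a\<^sup>2))" .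
  moreover have "I 0 = complex_of_real (sqrt (pi / a) * exp (- (t\<^sup>2) / (4 * a)))"
    using fourier_integral_gauss[OF a, of t] by (simp add: I_def)
  ultimately show ?thesis by (simp add: I_def)
qed

lemma fourier_integral_gauss_width:
  fixes \<sigma> t :: real assumes \<sigma>: "0 < \<sigma>"
  shows "fourier_integral (\<lambda>s. exp (- s\<^sup>2 / \<sigma>\<^sup>2)) t
      = complex_of_real (sqrt pi * \<sigma> * exp (- (t * \<sigma>)\<^sup>2 / 4))"
    and "fourier_integral (\<lambda>s. s\<^sup>2 * exp (- s\<^sup>2 / \<sigma>\<^sup>2)) t
      = complex_of_real (sqrt pi * \<sigma> * exp (- (t * \<sigma>)\<^sup>2 / 4) * (\<sigma>\<^sup>2 / 2 - (t * \<sigma>)\<^sup>2 * \<sigma>\<^sup>2 / 4))"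
proof -
  have a: "0 < 1 / \<sigma>\<^sup>2" using \<sigma> by simp
  have gauss: "exp (- s\<^sup>2 / \<sigma>\<^sup>2) = exp (- (1 / \<sigma>\<^sup>2) * s\<^sup>2)" for s
    by simp
  have width: "sqrt (pi / (1 / \<sigma>\<^sup>2)) = sqrt pi * \<sigma>"
    "- t\<^sup>2 / (4 * (1 / \<sigma>\<^sup>2)) = - (t * \<sigma>)\<^sup>2 / 4"
    "1 / (2 * (1 / \<sigma>\<^sup>2)) - t\<^sup>2 / (4 * (1 / \<sigma>\<^sup>2)\<^sup>2) = \<sigma>\<^sup>2 / 2 - (t * \<sigma>)\<^sup>2 * \<sigma>\<^sup>2 / 4"
    using \<sigma> by (simp_all add: real_sqrt_mult field_simps power2_eq_square)
  show "fourier_integral (\<lambda>s. exp (- s\<^sup>2 / \<sigma>\<^sup>2)) t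
      = complex_of_real (sqrt pi * \<sigma> * exp (- (t * \<sigma>)\<^sup>2 / 4))"
    and "fourier_integral (\<lambda>s. s\<^sup>2 * exp (- s\<^sup>2 / \<sigma>\<^sup>2)) t
      = complex_of_real (sqrt pi * \<sigma> * exp (- (t * \<sigma>)\<^sup>2 / 4) * (\<sigma>\<^sup>2 / 2 - (t * \<sigma>)\<^sup>2 * \<sigma>\<^sup>2 / 4))"
    unfolding gauss fourier_integral_gauss[OF a] fourier_integral_sq_gauss[OF a] width by simp_all
qed

section \<open>Gaussian integrals on Euclidean space\<close>

lemma lborel_integral_prod_inner_Basis:
  fixes f :: "'a::euclidean_space \<Rightarrow> real \<Rightarrow> 'b::{real_normed_field,banach,second_countable_topology}"
  assumes f: "\<And>b. b \<in> Basis \<Longrightarrow> integrable lborel (f b)"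
  shows "integrable lborel (\<lambda>y::'a. \<Prod>b\<in>Basis. f b (y \<bullet> b))"
    and "(LINT y|lborel. (\<Prod>b\<in>Basis. f b (y \<bullet> b))) = (\<Prod>b\<in>Basis. LINT u|lborel. f b u)"
proof -
  interpret product_sigma_finite "\<lambda>_::'a. lborel :: real measure"
    by standard
  define T where "T = (\<lambda>\<phi>::'a \<Rightarrow> real. \<Sum>b\<in>Basis. \<phi> b *\<^sub>R b)"
  have T: "T \<in> measurable (\<Pi>\<^sub>M b\<in>Basis. lborel) borel"
    unfolding T_def by measurable
  have [measurable]: "f b \<in> borel_measurable borel" if "b \<in> Basis" for b
    using f[OF that] by (simp add: borel_measurable_integrable)
  have "(\<lambda>y::'a. \<Prod>b\<in>Basis. f b (y \<bullet> b)) \<in> borel_measurable borel"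
    by (intro borel_measurable_prod) measurable
  note lborel_distr = integrable_distr_eq[OF T this] integral_distr[OF T this]
  have "(\<lambda>\<phi>. \<Prod>b\<in>Basis. f b (T \<phi> \<bullet> b)) = (\<lambda>\<phi>. \<Prod>b\<in>Basis. f b (\<phi> b))"
    by (intro ext prod.cong refl)
       (simp add: T_def inner_sum_left inner_Basis if_distrib cong: if_cong)
  then show "integrable lborel (\<lambda>y::'a. \<Prod>b\<in>Basis. f b (y \<bullet> b))"
    and "(LINT y|lborel. (\<Prod>b\<in>Basis. f b (y \<bullet> b))) = (\<Prod>b\<in>Basis. LINT u|lborel. f b u)"
    unfolding lborel_eq[where 'a = 'a] T_def[symmetric] lborel_distr
    by (simp_all add: product_integrable_prod product_integral_prod f)
qed

lemma norm_sq_eq_sum_inner_Basis: "(norm y)\<^sup>2 = (\<Sum>b\<in>Basis. (y \<bullet> b)\<^sup>2)"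
  unfolding power2_norm_eq_inner euclidean_inner[of y y] by (simp add: power2_eq_square)

lemma prod_Basis_gauss_fourier_integrand:
  fixes y v :: "'a::euclidean_space" and k :: "'a \<Rightarrow> nat"
  shows "(\<Prod>b\<in>Basis. complex_of_real ((y \<bullet> b) ^ k b * exp (- a * (y \<bullet> b)\<^sup>2))
            * exp (\<i> * complex_of_real ((v \<bullet> b) * (y \<bullet> b))))
    = complex_of_real ((\<Prod>b\<in>Basis. (y \<bullet> b) ^ k b) * exp (- a * (norm y)\<^sup>2))
        * exp (\<i> * complex_of_real (v \<bullet> y))"
proof -
  have gauss: "exp (- a * (norm y)\<^sup>2) = (\<Prod>b\<in>Basis. exp (- a * (y \<bullet> b)\<^sup>2))"
    by (simp add: norm_sq_eq_sum_inner_Basis sum_distrib_left exp_sum)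
  have cis: "exp (\<i> * complex_of_real (v \<bullet> y))
      = (\<Prod>b\<in>Basis. exp (\<i> * complex_of_real ((v \<bullet> b) * (y \<bullet> b))))"
    by (simp add: euclidean_inner[of v y] sum_distrib_left exp_sum)
  show ?thesis unfolding gauss cis of_real_mult of_real_prod prod.distrib ..
qed

lemma fourier_integral_monomial_gauss:
  fixes a :: real and k :: "'a::euclidean_space \<Rightarrow> nat" and v :: 'a
  assumes a: "0 < a"
  shows "integrable lborel (\<lambda>y::'a. (\<Prod>b\<in>Basis. (y \<bullet> b) ^ k b) * exp (- a * (norm y)\<^sup>2))"
    and "fourier_integral (\<lambda>y. (\<Prod>b\<in>Basis. (y \<bullet> b) ^ k b) * exp (- a * (norm y)\<^sup>2)) v
      = (\<Prod>b\<in>Basis. fourier_integral (\<lambda>u. u ^ k b * exp (- a * u\<^sup>2)) (v \<bullet> b))"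
proof -
  define f where "f = (\<lambda>(w::'a) (b::'a) (u::real).
    complex_of_real (u ^ k b * exp (- a * u\<^sup>2)) * exp (\<i> * complex_of_real ((w \<bullet> b) * u)))"
  have f_int: "integrable lborel (f w b)" for w b
    using integrable_fourier_integrand[OF integrable_power_gauss[OF a, of "k b"], of "w \<bullet> b"]
    by (simp add: f_def)
  have prod_f: "(\<Prod>b\<in>Basis. f w b (y \<bullet> b)) = complex_of_real ((\<Prod>b\<in>Basis. (y \<bullet> b) ^ k b) * exp (- a * (norm y)\<^sup>2))
      * exp (\<i> * complex_of_real (w \<bullet> y))" for w y
    unfolding f_def by (rule prod_Basis_gauss_fourier_integrand)
  have "integrable lborel (\<lambda>y::'a. complex_of_real ((\<Prod>b\<in>Basis. (y \<bullet> b) ^ k b) * exp (- a * (norm y)\<^sup>2)))"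
    using lborel_integral_prod_inner_Basis(1)[of "f 0", OF f_int] by (simp add: prod_f)
  then show "integrable lborel (\<lambda>y::'a. (\<Prod>b\<in>Basis. (y \<bullet> b) ^ k b) * exp (- a * (norm y)\<^sup>2))"
    by (rule complex_of_real_integrable_eq[THEN iffD1])
  show "fourier_integral (\<lambda>y. (\<Prod>b\<in>Basis. (y \<bullet> b) ^ k b) * exp (- a * (norm y)\<^sup>2)) v
      = (\<Prod>b\<in>Basis. fourier_integral (\<lambda>u. u ^ k b * exp (- a * u\<^sup>2)) (v \<bullet> b))"
    using lborel_integral_prod_inner_Basis(2)[of "f v", OF f_int] unfolding prod_f
    by (simp only: f_def fourier_integral_def inner_real_def)
qed

lemma integrable_gauss_vec:
  assumes "0 < a"
  shows "integrable lborel (\<lambda>y::'a::euclidean_space. exp (- a * (norm y)\<^sup>2))"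
  using fourier_integral_monomial_gauss(1)[OF assms, of "\<lambda>_. 0"] by simp

lemma fourier_integral_gauss_vec:
  fixes v :: "'a::euclidean_space" assumes a: "0 < a"
  shows "fourier_integral (\<lambda>y::'a. exp (- a * (norm y)\<^sup>2)) v
    = complex_of_real (sqrt (pi / a) ^ DIM('a) * exp (- (norm v)\<^sup>2 / (4 * a)))"
proof -
  have "fourier_integral (\<lambda>y::'a. exp (- a * (norm y)\<^sup>2)) v
      = (\<Prod>b\<in>Basis. complex_of_real (sqrt (pi / a) * exp (- (v \<bullet> b)\<^sup>2 / (4 * a))))"
    using fourier_integral_monomial_gauss(2)[OF a, of "\<lambda>_. 0" v]
    unfolding power_0 mult_1_left prod.neutral_const fourier_integral_gauss[OF a] .
  also have "\<dots> = complex_of_real (sqrt (pi / a) ^ DIM('a) * exp (- (norm v)\<^sup>2 / (4 * a)))"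
    by (simp add: of_real_prod[symmetric] prod.distrib exp_sum[symmetric] norm_sq_eq_sum_inner_Basis
        sum_divide_distrib sum_negf)
  finally show ?thesis .
qed

lemma norm_sq_gauss_eq_sum_monomials:
  fixes y :: "'a::euclidean_space"
  shows "(norm y)\<^sup>2 * exp (- a * (norm y)\<^sup>2)
    = (\<Sum>c\<in>Basis. (\<Prod>b\<in>Basis. (y \<bullet> b) ^ (if b = c then 2 else 0)) * exp (- a * (norm y)\<^sup>2))"
proof -
  have "(\<Prod>b\<in>Basis. (y \<bullet> b) ^ (if b = c then 2 else 0)) = (y \<bullet> c)\<^sup>2" if "c \<in> Basis" for c
    using that by (simp add: if_distrib cong: if_cong)
  then show ?thesis
    by (simp add: norm_sq_eq_sum_inner_Basis sum_distrib_right)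
qed

lemma integrable_norm_sq_gauss_vec:
  assumes a: "0 < a"
  shows "integrable lborel (\<lambda>y::'a::euclidean_space. (norm y)\<^sup>2 * exp (- a * (norm y)\<^sup>2))"
  unfolding norm_sq_gauss_eq_sum_monomials
  by (intro Bochner_Integration.integrable_sum fourier_integral_monomial_gauss(1)[OF a])

lemma fourier_integral_norm_sq_gauss_vec:
  fixes v :: "'a::euclidean_space" assumes a: "0 < a"
  shows "fourier_integral (\<lambda>y::'a. (norm y)\<^sup>2 * exp (- a * (norm y)\<^sup>2)) v
    = complex_of_real (sqrt (pi / a) ^ DIM('a) * exp (- (norm v)\<^sup>2 / (4 * a))
        * (DIM('a) / (2 * a) - (norm v)\<^sup>2 / (4 * a\<^sup>2)))"
proof -
  define Q where "Q s = sqrt (pi / a) * exp (- s\<^sup>2 / (4 * a))" for s :: real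
  define r where "r s = 1 / (2 * a) - s\<^sup>2 / (4 * a\<^sup>2)" for s :: real
  have factor: "fourier_integral (\<lambda>u. u ^ (if b = c then 2 else 0) * exp (- a * u\<^sup>2)) (v \<bullet> b)
      = complex_of_real (Q (v \<bullet> b) * (if b = c then r (v \<bullet> b) else 1))" for b c :: 'a
  proof (cases "b = c")
    case True
    then show ?thesis using fourier_integral_sq_gauss[OF a, of "v \<bullet> b"] by (simp add: Q_def r_def)
  next
    case False
    then show ?thesis using fourier_integral_gauss[OF a, of "v \<bullet> b"] by (simp add: Q_def)
  qed
  have monomial: "fourier_integral (\<lambda>y. (\<Prod>b\<in>Basis. (y \<bullet> b) ^ (if b = c then 2 else 0)) * exp (- a * (norm y)\<^sup>2)) v
      = complex_of_real ((\<Prod>b\<in>Basis. Q (v \<bullet> b)) * r (v \<bullet> c))" if "c \<in> Basis" for c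
    unfolding fourier_integral_monomial_gauss(2)[OF a] factor of_real_prod[symmetric] prod.distrib
    using that by simp
  have "fourier_integral (\<lambda>y::'a. (norm y)\<^sup>2 * exp (- a * (norm y)\<^sup>2)) v
      = (\<Sum>c\<in>Basis. complex_of_real ((\<Prod>b\<in>Basis. Q (v \<bullet> b)) * r (v \<bullet> c)))"
    unfolding norm_sq_gauss_eq_sum_monomials fourier_integral_sum[OF fourier_integral_monomial_gauss(1)[OF a]]
    by (intro sum.cong refl monomial)
  also have "\<dots> = complex_of_real ((\<Prod>b\<in>Basis. Q (v \<bullet> b)) * (\<Sum>c\<in>Basis. r (v \<bullet> c)))"
    by (simp add: sum_distrib_left)
  also have "(\<Prod>b\<in>Basis. Q (v \<bullet> b)) = sqrt (pi / a) ^ DIM('a) * exp (- (norm v)\<^sup>2 / (4 * a))"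
    by (simp add: Q_def prod.distrib exp_sum[symmetric] norm_sq_eq_sum_inner_Basis sum_divide_distrib sum_negf)
  also have "(\<Sum>c\<in>Basis. r (v \<bullet> c)) = DIM('a) / (2 * a) - (norm v)\<^sup>2 / (4 * a\<^sup>2)"
    by (simp add: r_def sum_subtractf norm_sq_eq_sum_inner_Basis sum_divide_distrib)
  finally show ?thesis .
qed

section \<open>Push-forward of Gaussian densities under a linear functional\<close>

lemma prob_space_density_normalized:
  fixes f :: "'a \<Rightarrow> real"
  assumes "\<And>w. 0 \<le> f w" and "integrable M f" and "0 < integral\<^sup>L M f"
  shows "prob_space (density M (\<lambda>w. ennreal (f w / integral\<^sup>L M f)))"
proof (rule prob_spaceI)
  have "emeasure (density M (\<lambda>w. ennreal (f w / integral\<^sup>L M f))) (space M)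
      = ennreal (integral\<^sup>L M (\<lambda>w. f w / integral\<^sup>L M f))"
    using assms by (simp add: emeasure_density nn_integral_eq_integral)
  then show "emeasure (density M (\<lambda>w. ennreal (f w / integral\<^sup>L M f)))
      (space (density M (\<lambda>w. ennreal (f w / integral\<^sup>L M f)))) = 1"
    using assms by simp
qed

text \<open>After normalisation by \<open>\<integral>\<rho>\<close>, the push-forward of \<open>f \<cdot> M\<close> under \<open>T\<close> and \<open>\<rho> \<cdot> lborel\<close> are
  probability distributions with the same characteristic function, hence equal by Levy's
  uniqueness theorem.\<close>
lemma integral_density_comp_eq_of_char_eq:
  fixes f :: "'a \<Rightarrow> real" and T :: "'a \<Rightarrow> real" and \<rho> F :: "real \<Rightarrow> real"
  assumes [measurable]: "f \<in> borel_measurable M" "T \<in> borel_measurable M"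
      "\<rho> \<in> borel_measurable borel" "F \<in> borel_measurable borel"
    and f_nonneg: "\<And>w. 0 \<le> f w" and f_int: "integrable M f"
    and \<rho>_nonneg: "\<And>s. 0 \<le> \<rho> s" and \<rho>_int: "integrable lborel \<rho>"
    and \<rho>_pos: "0 < integral\<^sup>L lborel \<rho>"
    and char_eq: "\<And>t. (LINT w|M. complex_of_real (f w) * exp (\<i> * complex_of_real (t * T w)))
      = fourier_integral \<rho> t"
    and F_int: "integrable lborel (\<lambda>s. \<rho> s * F s)"
  shows "integrable M (\<lambda>w. f w * F (T w))"
    and "(LINT w|M. f w * F (T w)) = (LINT s|lborel. \<rho> s * F s)"
proof -
  define c where "c = integral\<^sup>L lborel \<rho>"
  have c: "0 < c" using \<rho>_pos by (simp add: c_def)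
  have f_c: "integral\<^sup>L M f = c"
    using char_eq[of 0] by (simp add: c_def fourier_integral_def)
  define M1 where "M1 = distr (density M (\<lambda>w. ennreal (f w / c))) borel T"
  define M2 where "M2 = density lborel (\<lambda>s. ennreal (\<rho> s / c))"
  have "real_distribution M1"
    using prob_space_density_normalized[OF f_nonneg f_int] c
    unfolding M1_def real_distribution_def real_distribution_axioms_def f_c
    by (auto intro: prob_space.prob_space_distr)
  moreover have "real_distribution M2"
    using prob_space_density_normalized[OF \<rho>_nonneg \<rho>_int \<rho>_pos]
    unfolding M2_def real_distribution_def real_distribution_axioms_def c_def
    by simp
  moreover have "char M1 = char M2"
  proof
    fix t
    have "char M1 t = (LINT w|M. complex_of_real (f w) * exp (\<i> * complex_of_real (t * T w))) / c"
      unfolding char_def M1_def using c f_nonneg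
      by (simp add: integral_distr integral_density scaleR_conv_of_real mult_ac)
    also have "\<dots> = char M2 t"
      unfolding char_eq char_def M2_def fourier_integral_def using c \<rho>_nonneg
      by (simp add: integral_density scaleR_conv_of_real mult_ac)
    finally show "char M1 t = char M2 t" .
  qed
  ultimately have "M1 = M2" by (rule Levy_uniqueness)
  have "integrable M2 F"
    unfolding M2_def using c \<rho>_nonneg F_int
    by (subst integrable_density) (auto simp: mult_ac)
  then have "integrable M (\<lambda>w. c * ((f w / c) * F (T w)))"
    unfolding \<open>M1 = M2\<close>[symmetric] M1_def using c f_nonneg
    by (intro integrable_mult_right) (simp add: integrable_distr_eq integrable_density)
  then show "integrable M (\<lambda>w. f w * F (T w))"
    using c by simp
  have "(LINT w|M. f w / c * F (T w)) = (LINT s|lborel. \<rho> s / c * F s)"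
    using arg_cong[OF \<open>M1 = M2\<close>, of "\<lambda>M. integral\<^sup>L M F"] c f_nonneg \<rho>_nonneg
    by (simp add: M1_def M2_def integral_distr integral_density)
  then show "(LINT w|M. f w * F (T w)) = (LINT s|lborel. \<rho> s * F s)"
    using c by simp
qed

lemma integral_comp_inner_eq_of_fourier_eq:
  fixes f :: "'a::euclidean_space \<Rightarrow> real" and x :: 'a and F :: "real \<Rightarrow> real"
  assumes f_cont: "continuous_on UNIV f" and f_nonneg: "\<And>w. 0 \<le> f w"
    and f_int: "integrable lborel f" and f_pos: "0 < integral\<^sup>L lborel f"
    and a: "0 < a" and p_nonneg: "\<And>s. 0 \<le> poly p s"
    and fourier_eq: "\<And>t. fourier_integral f (t *\<^sub>R x) = fourier_integral (\<lambda>s. poly p s * exp (- a * s\<^sup>2)) t"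
    and [measurable]: "F \<in> borel_measurable borel" and F_bound: "\<And>s. \<bar>F s\<bar> \<le> C * (1 + s\<^sup>2)"
  shows "integrable lborel (\<lambda>w. f w * F (x \<bullet> w))"
    and "(LINT w|lborel. f w * F (x \<bullet> w)) = (LINT s|lborel. poly p s * exp (- a * s\<^sup>2) * F s)"
proof -
  define \<rho> where "\<rho> = (\<lambda>s. poly p s * exp (- a * s\<^sup>2))"
  have f_meas: "f \<in> borel_measurable lborel"
    using f_cont by (simp add: borel_measurable_continuous_onI)
  have inner_meas: "(\<lambda>w. x \<bullet> w) \<in> borel_measurable lborel"
    by (simp add: borel_measurable_continuous_onI continuous_on_inner)
  have \<rho>_meas: "\<rho> \<in> borel_measurable borel"
    unfolding \<rho>_def by (intro borel_measurable_continuous_onI continuous_intros)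
  have \<rho>_nonneg: "0 \<le> \<rho> s" for s
    unfolding \<rho>_def using p_nonneg by simp
  have \<rho>_int: "integrable lborel \<rho>"
    unfolding \<rho>_def by (rule integrable_poly_gauss[OF a])
  have "fourier_integral f 0 = fourier_integral \<rho> 0"
    using fourier_eq[of 0] by (simp add: \<rho>_def)
  then have \<rho>_pos: "0 < integral\<^sup>L lborel \<rho>"
    using f_pos by (simp add: fourier_integral_zero)
  have char_eq: "(LINT w|lborel. complex_of_real (f w) * exp (\<i> * complex_of_real (t * (x \<bullet> w))))
      = fourier_integral \<rho> t" for t
    using fourier_eq[of t] by (simp add: fourier_integral_def \<rho>_def)
  have F_int: "integrable lborel (\<lambda>s. \<rho> s * F s)"
    unfolding \<rho>_def using F_bound by (intro integrable_poly_gauss_mult[OF a]) auto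
  from integral_density_comp_eq_of_char_eq[OF f_meas inner_meas \<rho>_meas \<open>F \<in> borel_measurable borel\<close> f_nonneg f_int
      \<rho>_nonneg \<rho>_int \<rho>_pos char_eq F_int]
  show "integrable lborel (\<lambda>w. f w * F (x \<bullet> w))"
    and "(LINT w|lborel. f w * F (x \<bullet> w)) = (LINT s|lborel. poly p s * exp (- a * s\<^sup>2) * F s)"
    by (simp_all add: \<rho>_def)
qed

lemma fourier_integral_gauss_vec_scaleR:
  fixes x :: "'a::euclidean_space" assumes x: "x \<noteq> 0"
  defines "\<sigma> \<equiv> norm x" and "\<kappa> \<equiv> sqrt pi ^ DIM('a) / (sqrt pi * norm x)"
  shows "fourier_integral (\<lambda>w::'a. exp (- (norm w)\<^sup>2)) (t *\<^sub>R x)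
    = fourier_integral (\<lambda>s. poly [:\<kappa>:] s * exp (- (1 / \<sigma>\<^sup>2) * s\<^sup>2)) t"
proof -
  have \<sigma>: "0 < \<sigma>" using x by (simp add: \<sigma>_def)
  then have \<kappa>: "\<kappa> * (sqrt pi * \<sigma>) = sqrt pi ^ DIM('a)"
    by (simp add: \<kappa>_def \<sigma>_def)
  have "sqrt pi ^ DIM('a) * exp (- (norm (t *\<^sub>R x))\<^sup>2 / 4) = \<kappa> * (sqrt pi * \<sigma> * exp (- (t * \<sigma>)\<^sup>2 / 4))"
    unfolding \<kappa>[symmetric] by (simp add: \<sigma>_def power_mult_distrib)
  then have "fourier_integral (\<lambda>w::'a. exp (- (norm w)\<^sup>2)) (t *\<^sub>R x)
      = complex_of_real (\<kappa> * (sqrt pi * \<sigma> * exp (- (t * \<sigma>)\<^sup>2 / 4)))"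
    using fourier_integral_gauss_vec[of 1 "t *\<^sub>R x"] by simp
  also have "\<dots> = fourier_integral (\<lambda>s. poly [:\<kappa>:] s * exp (- (1 / \<sigma>\<^sup>2) * s\<^sup>2)) t"
    using fourier_integral_gauss_width(1)[OF \<sigma>, of t] by (simp add: fourier_integral_cmult)
  finally show ?thesis .
qed

lemma integral_gauss_vec_comp_inner:
  fixes x :: "'a::euclidean_space" and F :: "real \<Rightarrow> real"
  assumes x: "x \<noteq> 0" and F_meas: "F \<in> borel_measurable borel"
    and F_bound: "\<And>s. \<bar>F s\<bar> \<le> C * (1 + s\<^sup>2)"
  shows "integrable lborel (\<lambda>w::'a. exp (- (norm w)\<^sup>2) * F (x \<bullet> w))"
    and "(LINT w|lborel. exp (- (norm w)\<^sup>2) * F (x \<bullet> w))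
      = sqrt pi ^ DIM('a) / (sqrt pi * norm x) * (LINT s|lborel. exp (- s\<^sup>2 / (norm x)\<^sup>2) * F s)"
proof -
  define \<sigma> where "\<sigma> = norm x"
  define \<kappa> where "\<kappa> = sqrt pi ^ DIM('a) / (sqrt pi * \<sigma>)"
  have \<sigma>: "0 < \<sigma>" using x by (simp add: \<sigma>_def)
  have f_cont: "continuous_on UNIV (\<lambda>w::'a. exp (- (norm w)\<^sup>2))"
    by (intro continuous_intros)
  have f_pos: "0 < integral\<^sup>L lborel (\<lambda>w::'a. exp (- (norm w)\<^sup>2))"
    using fourier_integral_gauss_vec[of 1 "0::'a"] by (simp add: fourier_integral_zero del: of_real_power)
  have a: "0 < 1 / \<sigma>\<^sup>2" and p_nonneg: "0 \<le> poly [:\<kappa>:] s" for s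
    using \<sigma> by (simp_all add: \<kappa>_def)
  note comp = integral_comp_inner_eq_of_fourier_eq[OF f_cont exp_ge_zero integrable_gauss_vec[of 1, simplified]
      f_pos a p_nonneg fourier_integral_gauss_vec_scaleR[OF x, folded \<sigma>_def, folded \<kappa>_def] F_meas F_bound]
  show "integrable lborel (\<lambda>w::'a. exp (- (norm w)\<^sup>2) * F (x \<bullet> w))"
    by (rule comp(1))
  have "(LINT w|lborel. exp (- (norm w)\<^sup>2) * F (x \<bullet> w))
      = (LINT s|lborel. \<kappa> * (exp (- s\<^sup>2 / \<sigma>\<^sup>2) * F s))"
    unfolding comp(2) by (simp add: mult.assoc)
  then show "(LINT w|lborel. exp (- (norm w)\<^sup>2) * F (x \<bullet> w))
      = sqrt pi ^ DIM('a) / (sqrt pi * norm x) * (LINT s|lborel. exp (- s\<^sup>2 / (norm x)\<^sup>2) * F s)"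
    by (simp add: \<kappa>_def \<sigma>_def)
qed

lemma fourier_integral_norm_sq_gauss_vec_scaleR:
  fixes x :: "'a::euclidean_space" assumes x: "x \<noteq> 0"
  defines "\<sigma> \<equiv> norm x" and "\<kappa> \<equiv> sqrt pi ^ DIM('a) / (sqrt pi * norm x)"
    and "c \<equiv> (real DIM('a) - 1) / 2"
  shows "fourier_integral (\<lambda>w::'a. (norm w)\<^sup>2 * exp (- (norm w)\<^sup>2)) (t *\<^sub>R x)
    = fourier_integral (\<lambda>s. poly [:\<kappa> * c, 0, \<kappa> / \<sigma>\<^sup>2:] s * exp (- (1 / \<sigma>\<^sup>2) * s\<^sup>2)) t"
proof -
  have \<sigma>: "0 < \<sigma>" using x by (simp add: \<sigma>_def)
  then have \<kappa>: "\<kappa> * (sqrt pi * \<sigma>) = sqrt pi ^ DIM('a)"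
    by (simp add: \<kappa>_def \<sigma>_def)
  have c: "c + 1 / 2 = DIM('a) / 2"
    by (simp add: c_def field_simps)
  have "sqrt pi ^ DIM('a) * exp (- (norm (t *\<^sub>R x))\<^sup>2 / 4) * (DIM('a) / 2 - (norm (t *\<^sub>R x))\<^sup>2 / 4)
      = \<kappa> * (sqrt pi * \<sigma>) * exp (- (t * \<sigma>)\<^sup>2 / 4) * (c + 1 / 2 - (t * \<sigma>)\<^sup>2 / 4)"
    unfolding \<kappa> c by (simp add: \<sigma>_def power_mult_distrib)
  also have "\<dots> = \<kappa> * c * (sqrt pi * \<sigma> * exp (- (t * \<sigma>)\<^sup>2 / 4))
      + \<kappa> / \<sigma>\<^sup>2 * (sqrt pi * \<sigma> * exp (- (t * \<sigma>)\<^sup>2 / 4) * (\<sigma>\<^sup>2 / 2 - (t * \<sigma>)\<^sup>2 * \<sigma>\<^sup>2 / 4))"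
    using \<sigma> by (simp add: field_simps power2_eq_square)
  finally have "fourier_integral (\<lambda>w::'a. (norm w)\<^sup>2 * exp (- (norm w)\<^sup>2)) (t *\<^sub>R x)
      = complex_of_real (\<kappa> * c * (sqrt pi * \<sigma> * exp (- (t * \<sigma>)\<^sup>2 / 4))
        + \<kappa> / \<sigma>\<^sup>2 * (sqrt pi * \<sigma> * exp (- (t * \<sigma>)\<^sup>2 / 4) * (\<sigma>\<^sup>2 / 2 - (t * \<sigma>)\<^sup>2 * \<sigma>\<^sup>2 / 4)))"
    using fourier_integral_norm_sq_gauss_vec[of 1 "t *\<^sub>R x"] by simp
  also have "\<dots> = fourier_integral (\<lambda>s. poly [:\<kappa> * c, 0, \<kappa> / \<sigma>\<^sup>2:] s * exp (- (1 / \<sigma>\<^sup>2) * s\<^sup>2)) t"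
  proof -
    have poly_eq: "(\<lambda>s. poly [:\<kappa> * c, 0, \<kappa> / \<sigma>\<^sup>2:] s * exp (- (1 / \<sigma>\<^sup>2) * s\<^sup>2))
        = (\<lambda>s. \<kappa> * c * exp (- s\<^sup>2 / \<sigma>\<^sup>2) + \<kappa> / \<sigma>\<^sup>2 * (s\<^sup>2 * exp (- s\<^sup>2 / \<sigma>\<^sup>2)))"
      by (simp add: fun_eq_iff algebra_simps power2_eq_square)
    have int: "integrable lborel (\<lambda>s. exp (- s\<^sup>2 / \<sigma>\<^sup>2))" "integrable lborel (\<lambda>s. s\<^sup>2 * exp (- s\<^sup>2 / \<sigma>\<^sup>2))"
      using integrable_power_gauss[of "1 / \<sigma>\<^sup>2" 0] integrable_power_gauss[of "1 / \<sigma>\<^sup>2" 2] \<sigma> by simp_all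
    show ?thesis
      unfolding poly_eq fourier_integral_lincomb[OF int] fourier_integral_gauss_width[OF \<sigma>] by simp
  qed
  finally show ?thesis .
qed

lemma integral_norm_sq_gauss_vec_comp_inner:
  fixes x :: "'a::euclidean_space" and F :: "real \<Rightarrow> real"
  assumes x: "x \<noteq> 0" and F_meas: "F \<in> borel_measurable borel"
    and F_bound: "\<And>s. \<bar>F s\<bar> \<le> C * (1 + s\<^sup>2)"
  shows "integrable lborel (\<lambda>w::'a. (norm w)\<^sup>2 * exp (- (norm w)\<^sup>2) * F (x \<bullet> w))"
    and "(LINT w|lborel. (norm w)\<^sup>2 * exp (- (norm w)\<^sup>2) * F (x \<bullet> w))
      = sqrt pi ^ DIM('a) / (sqrt pi * norm x)
        * (LINT s|lborel. (s\<^sup>2 / (norm x)\<^sup>2 + (real DIM('a) - 1) / 2) * exp (- s\<^sup>2 / (norm x)\<^sup>2) * F s)"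
proof -
  define \<sigma> where "\<sigma> = norm x"
  define \<kappa> where "\<kappa> = sqrt pi ^ DIM('a) / (sqrt pi * \<sigma>)"
  define c where "c = (real DIM('a) - 1) / 2"
  have \<sigma>: "0 < \<sigma>" using x by (simp add: \<sigma>_def)
  have f_cont: "continuous_on UNIV (\<lambda>w::'a. (norm w)\<^sup>2 * exp (- (norm w)\<^sup>2))"
    by (intro continuous_intros)
  have f_nonneg: "0 \<le> (norm w)\<^sup>2 * exp (- (norm w)\<^sup>2)" for w :: 'a
    by simp
  have f_integral: "integral\<^sup>L lborel (\<lambda>w::'a. (norm w)\<^sup>2 * exp (- (norm w)\<^sup>2)) = sqrt pi ^ DIM('a) * (DIM('a) / 2)"
    using fourier_integral_norm_sq_gauss_vec[of 1 "0::'a"] unfolding fourier_integral_zero of_real_eq_iff by simp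
  have f_pos: "0 < integral\<^sup>L lborel (\<lambda>w::'a. (norm w)\<^sup>2 * exp (- (norm w)\<^sup>2))"
    unfolding f_integral by simp
  have a: "0 < 1 / \<sigma>\<^sup>2"
    using \<sigma> by simp
  have p_nonneg: "0 \<le> poly [:\<kappa> * c, 0, \<kappa> / \<sigma>\<^sup>2:] s" for s
  proof -
    have "0 \<le> \<kappa> * c + \<kappa> / \<sigma>\<^sup>2 * s\<^sup>2"
      using \<sigma> DIM_positive[where 'a = 'a] by (intro add_nonneg_nonneg mult_nonneg_nonneg) (simp_all add: \<kappa>_def c_def)
    then show ?thesis by (simp add: algebra_simps power2_eq_square)
  qed
  note comp = integral_comp_inner_eq_of_fourier_eq[OF f_cont f_nonneg integrable_norm_sq_gauss_vec[of 1, simplified]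
      f_pos a p_nonneg fourier_integral_norm_sq_gauss_vec_scaleR[OF x, folded \<sigma>_def, folded \<kappa>_def c_def]
      F_meas F_bound]
  show "integrable lborel (\<lambda>w::'a. (norm w)\<^sup>2 * exp (- (norm w)\<^sup>2) * F (x \<bullet> w))"
    by (rule comp(1))
  have "(LINT w|lborel. (norm w)\<^sup>2 * exp (- (norm w)\<^sup>2) * F (x \<bullet> w))
      = (LINT s|lborel. \<kappa> * ((s\<^sup>2 / \<sigma>\<^sup>2 + c) * exp (- s\<^sup>2 / \<sigma>\<^sup>2) * F s))"
    unfolding comp(2) by (simp add: algebra_simps power2_eq_square)
  then show "(LINT w|lborel. (norm w)\<^sup>2 * exp (- (norm w)\<^sup>2) * F (x \<bullet> w))
      = sqrt pi ^ DIM('a) / (sqrt pi * norm x)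
        * (LINT s|lborel. (s\<^sup>2 / (norm x)\<^sup>2 + (real DIM('a) - 1) / 2) * exp (- s\<^sup>2 / (norm x)\<^sup>2) * F s)"
    by (simp add: \<kappa>_def \<sigma>_def c_def)
qed

section \<open>The one-dimensional hinge integral\<close>

text \<open>\<open>-(2 u (u - K) + \<sigma>\<^sup>2) e^{-u\<^sup>2/\<sigma>\<^sup>2}\<close> is an antiderivative of \<open>h\<close>.\<close>
lemma integral_half_line_hinge_gauss:
  fixes \<sigma> K :: real assumes \<sigma>: "0 < \<sigma>"
  defines "h \<equiv> \<lambda>u. (u - K) * ((4 * u\<^sup>2 / \<sigma>\<^sup>2 - 2) * exp (- u\<^sup>2 / \<sigma>\<^sup>2))"
  shows "integrable lborel h"
    and "(LINT u|lborel. indicator {K<..} u * h u) = \<sigma>\<^sup>2 * exp (- K\<^sup>2 / \<sigma>\<^sup>2)"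
proof -
  have h_poly: "h = (\<lambda>u. poly [:2 * K, - 2, - 4 * K / \<sigma>\<^sup>2, 4 / \<sigma>\<^sup>2:] u * exp (- (1 / \<sigma>\<^sup>2) * u\<^sup>2))"
    using \<sigma> by (simp add: h_def fun_eq_iff field_simps power2_eq_square)
  show h_int: "integrable lborel h"
    unfolding h_poly using \<sigma> by (intro integrable_poly_gauss) simp
  have \<sigma>_ne: "\<sigma> \<noteq> 0" using \<sigma> by simp
  define H where "H u = - (2 * u * (u - K) + \<sigma>\<^sup>2) * exp (- u\<^sup>2 / \<sigma>\<^sup>2)" for u
  have H_deriv: "(H has_real_derivative h u) (at u)" for u
    unfolding H_def h_def
  proof (rule DERIV_cong)
    show "((\<lambda>u. - (2 * u * (u - K) + \<sigma>\<^sup>2) * exp (- u\<^sup>2 / \<sigma>\<^sup>2)) has_real_derivative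
        (- 2 * (u - K) - 2 * u) * exp (- u\<^sup>2 / \<sigma>\<^sup>2)
        - (2 * u * (u - K) + \<sigma>\<^sup>2) * (exp (- u\<^sup>2 / \<sigma>\<^sup>2) * (- 2 * u / \<sigma>\<^sup>2))) (at u)"
      using \<sigma>_ne by (auto intro!: derivative_eq_intros simp: field_simps power2_eq_square)
  qed (use \<sigma>_ne in \<open>simp add: field_simps power2_eq_square\<close>)
  have cont: "isCont H u" "isCont h u" for u
    unfolding H_def h_def using \<sigma>_ne by (auto intro!: continuous_intros)
  have "(LBINT u=ereal K..\<infinity>. h u) = 0 - H K"
  proof (rule interval_integral_FTC_integrable)
    show "set_integrable lborel (einterval (ereal K) \<infinity>) h"
      unfolding set_integrable_def using integrable_mult_indicator[OF _ h_int, of "{K<..}"] by simp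
    show "((H \<circ> real_of_ereal) \<longlongrightarrow> H K) (at_right (ereal K))"
      unfolding ereal_tendsto_simps1 using cont(1)[of K] by (simp add: isCont_def filterlim_at_split)
    have "((\<lambda>u. - (2 * u * (u - K) + \<sigma>\<^sup>2) * exp (- u\<^sup>2 / \<sigma>\<^sup>2)) \<longlongrightarrow> 0) at_top"
      using \<sigma> by real_asymp
    then show "((H \<circ> real_of_ereal) \<longlongrightarrow> 0) (at_left \<infinity>)"
      unfolding ereal_tendsto_simps1 H_def .
  qed (use H_deriv cont in \<open>auto simp: has_real_derivative_iff_has_vector_derivative\<close>)
  then show "(LINT u|lborel. indicator {K<..} u * h u) = \<sigma>\<^sup>2 * exp (- K\<^sup>2 / \<sigma>\<^sup>2)"
    by (simp add: interval_lebesgue_integral_def set_lebesgue_integral_def H_def)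
qed

text \<open>The integrand is even, so the integral is twice the one over \<open>{\<bar>k\<bar><..}\<close>.\<close>
lemma integral_hinge_gauss:
  fixes \<sigma> k :: real assumes \<sigma>: "0 < \<sigma>"
  shows "(LINT u|lborel. max 0 (\<bar>u\<bar> - \<bar>k\<bar>) * ((4 * u\<^sup>2 / \<sigma>\<^sup>2 - 2) * exp (- u\<^sup>2 / \<sigma>\<^sup>2)))
    = 2 * \<sigma>\<^sup>2 * exp (- k\<^sup>2 / \<sigma>\<^sup>2)"
proof -
  define h where "h u = (u - \<bar>k\<bar>) * ((4 * u\<^sup>2 / \<sigma>\<^sup>2 - 2) * exp (- u\<^sup>2 / \<sigma>\<^sup>2))" for u
  define h_right where "h_right = (\<lambda>u::real. indicator {\<bar>k\<bar><..} u * h u)"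
  note half = integral_half_line_hinge_gauss[OF \<sigma>, of "\<bar>k\<bar>", folded h_def]
  have int: "integrable lborel h_right"
    using integrable_mult_indicator[OF _ half(1), of "{\<bar>k\<bar><..}"] by (simp add: h_right_def)
  have int_reflected: "integrable lborel (\<lambda>u. h_right (- u))"
    using lborel_integrable_real_affine_iff[of "-1" h_right 0] int by simp
  have reflect: "(LINT u|lborel. h_right (- u)) = (LINT u|lborel. h_right u)"
    using lborel_integral_real_affine[of "-1" h_right 0] by simp
  have "(\<lambda>u. max 0 (\<bar>u\<bar> - \<bar>k\<bar>) * ((4 * u\<^sup>2 / \<sigma>\<^sup>2 - 2) * exp (- u\<^sup>2 / \<sigma>\<^sup>2)))
      = (\<lambda>u. h_right u + h_right (- u))"
    by (auto simp: fun_eq_iff h_right_def h_def indicator_def max_def)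
  then have "(LINT u|lborel. max 0 (\<bar>u\<bar> - \<bar>k\<bar>) * ((4 * u\<^sup>2 / \<sigma>\<^sup>2 - 2) * exp (- u\<^sup>2 / \<sigma>\<^sup>2)))
      = (LINT u|lborel. h_right u) + (LINT u|lborel. h_right (- u))"
    by (simp add: Bochner_Integration.integral_add[OF int int_reflected])
  also have "\<dots> = 2 * \<sigma>\<^sup>2 * exp (- k\<^sup>2 / \<sigma>\<^sup>2)"
    unfolding reflect using half(2) by (simp add: h_right_def)
  finally show ?thesis .
qed

section \<open>The kernel \<open>g\<^sub>d\<close>\<close>

lemma g_d_eq:
  fixes w :: "'a::euclidean_space"
  shows "g_d w = complex_of_real (sqrt pi / (2 * sqrt pi ^ DIM('a))
    * ((4 * (norm w)\<^sup>2 - 2 * DIM('a)) * exp (- (norm w)\<^sup>2)))"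
proof -
  have four_pi: "(2 * pi) powr (- real DIM('a)) * sqrt (pi / (1 / 4)) ^ DIM('a) = 1 / sqrt pi ^ DIM('a)"
  proof -
    have "sqrt (pi / (1 / 4)) = 2 * sqrt pi"
      by (simp add: real_sqrt_mult)
    moreover have "sqrt pi ^ DIM('a) * sqrt pi ^ DIM('a) = pi ^ DIM('a)"
      by (simp flip: power_mult_distrib)
    ultimately show ?thesis
      by (simp add: powr_minus powr_realpow divide_simps)
  qed
  have "fourier_integral (\<lambda>y::'a. (norm y)\<^sup>2 * exp (- (norm y)\<^sup>2 / 4)) w
      = complex_of_real (sqrt (pi / (1 / 4)) ^ DIM('a) * exp (- (norm w)\<^sup>2)
          * (2 * DIM('a) - 4 * (norm w)\<^sup>2))"
    using fourier_integral_norm_sq_gauss_vec[of "1 / 4" w] by (simp add: power_divide)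
  then have "g_d w = - complex_of_real (sqrt pi / 2) * (complex_of_real ((2 * pi) powr (- real DIM('a)))
      * complex_of_real (sqrt (pi / (1 / 4)) ^ DIM('a) * exp (- (norm w)\<^sup>2) * (2 * DIM('a) - 4 * (norm w)\<^sup>2)))"
    unfolding g_d_def inv_fourier_of_real by simp
  also have "\<dots> = complex_of_real (sqrt pi / 2 * ((2 * pi) powr (- real DIM('a)) * sqrt (pi / (1 / 4)) ^ DIM('a))
      * ((4 * (norm w)\<^sup>2 - 2 * DIM('a)) * exp (- (norm w)\<^sup>2)))"
    by (simp add: algebra_simps)
  finally show ?thesis
    unfolding four_pi by simp
qed

lemma integral_comp_inner_g_d:
  fixes x :: "'a::euclidean_space" and F :: "real \<Rightarrow> real"
  assumes x: "x \<noteq> 0" and F_meas: "F \<in> borel_measurable borel"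
    and F_bound: "\<And>s. \<bar>F s\<bar> \<le> C * (1 + s\<^sup>2)"
  shows "(LINT w|lborel. complex_of_real (F (x \<bullet> w)) * g_d w)
    = complex_of_real (1 / (2 * norm x)
        * (LINT s|lborel. F s * ((4 * s\<^sup>2 / (norm x)\<^sup>2 - 2) * exp (- s\<^sup>2 / (norm x)\<^sup>2))))"
proof -
  define \<sigma> where "\<sigma> = norm x"
  define d where "d = real DIM('a)"
  define \<kappa> where "\<kappa> = sqrt pi ^ DIM('a) / (sqrt pi * \<sigma>)"
  define c\<^sub>d where "c\<^sub>d = sqrt pi / (2 * sqrt pi ^ DIM('a))"
  define A where "A = (\<lambda>s. (s\<^sup>2 / \<sigma>\<^sup>2 + (d - 1) / 2) * exp (- s\<^sup>2 / \<sigma>\<^sup>2) * F s)"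
  define B where "B = (\<lambda>s. exp (- s\<^sup>2 / \<sigma>\<^sup>2) * F s)"
  have \<sigma>: "0 < \<sigma>" using x by (simp add: \<sigma>_def)
  have int: "integrable lborel (\<lambda>s. poly p s * exp (- (1 / \<sigma>\<^sup>2) * s\<^sup>2) * F s)" for p
    using \<sigma> by (intro integrable_poly_gauss_mult[OF _ F_meas F_bound]) simp
  have int_A: "integrable lborel A"
    using int[of "[:(d - 1) / 2, 0, 1 / \<sigma>\<^sup>2:]"] by (simp add: A_def algebra_simps power2_eq_square)
  have int_B: "integrable lborel B"
    using int[of 1] by (simp add: B_def)
  note I\<^sub>0 = integral_gauss_vec_comp_inner[OF x F_meas F_bound]
  note I\<^sub>1 = integral_norm_sq_gauss_vec_comp_inner[OF x F_meas F_bound]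
  have "(\<lambda>w. complex_of_real (F (x \<bullet> w)) * g_d w)
      = (\<lambda>w. complex_of_real (c\<^sub>d * (4 * ((norm w)\<^sup>2 * exp (- (norm w)\<^sup>2) * F (x \<bullet> w))
          - 2 * d * (exp (- (norm w)\<^sup>2) * F (x \<bullet> w)))))"
    by (simp add: fun_eq_iff g_d_eq c\<^sub>d_def d_def algebra_simps)
  then have "(LINT w|lborel. complex_of_real (F (x \<bullet> w)) * g_d w)
      = complex_of_real (LINT w|lborel. c\<^sub>d * (4 * ((norm w)\<^sup>2 * exp (- (norm w)\<^sup>2) * F (x \<bullet> w))
          - 2 * d * (exp (- (norm w)\<^sup>2) * F (x \<bullet> w))))"
    by (simp only: integral_complex_of_real)
  also have "(LINT w|lborel. c\<^sub>d * (4 * ((norm w)\<^sup>2 * exp (- (norm w)\<^sup>2) * F (x \<bullet> w))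
          - 2 * d * (exp (- (norm w)\<^sup>2) * F (x \<bullet> w))))
      = c\<^sub>d * (4 * (\<kappa> * integral\<^sup>L lborel A) - 2 * d * (\<kappa> * integral\<^sup>L lborel B))"
    using I\<^sub>0 I\<^sub>1 by (simp add: A_def B_def \<kappa>_def \<sigma>_def d_def)
  also have "\<dots> = c\<^sub>d * \<kappa> * (LINT s|lborel. 4 * A s - 2 * d * B s)"
    using int_A int_B by (simp add: algebra_simps)
  also have "\<dots> = 1 / (2 * \<sigma>) * (LINT s|lborel. F s * ((4 * s\<^sup>2 / \<sigma>\<^sup>2 - 2) * exp (- s\<^sup>2 / \<sigma>\<^sup>2)))"
  proof -
    have "c\<^sub>d * \<kappa> = 1 / (2 * \<sigma>)"
      using \<sigma> by (simp add: c\<^sub>d_def \<kappa>_def)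
    moreover have "4 * A s - 2 * d * B s = F s * ((4 * s\<^sup>2 / \<sigma>\<^sup>2 - 2) * exp (- s\<^sup>2 / \<sigma>\<^sup>2))" for s
      by (simp add: A_def B_def field_simps)
    ultimately show ?thesis by simp
  qed
  finally show ?thesis
    unfolding \<sigma>_def .
qed

theorem mainTheorem10:
  fixes x :: "'a::euclidean_space" and k :: real
  shows "complex_of_real (G_d x k) =
    (LINT w|lborel. complex_of_real (max 0 (\<bar>x \<bullet> w\<bar> - \<bar>k\<bar>)) * g_d w)"
proof (cases "x = 0")
  case True
  then show ?thesis by (simp add: G_d_def)
next
  case False
  have hinge_bound: "\<bar>max 0 (\<bar>s\<bar> - \<bar>k\<bar>)\<bar> \<le> 1 * (1 + s\<^sup>2)" for s
    using zero_le_power2[of "\<bar>s\<bar> - 1"] zero_le_square[of s]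
    by (auto simp: max_def power2_eq_square algebra_simps)
  have hinge_meas: "(\<lambda>s. max 0 (\<bar>s\<bar> - \<bar>k\<bar>)) \<in> borel_measurable borel"
    by (intro borel_measurable_continuous_onI continuous_intros)
  have "(LINT w|lborel. complex_of_real (max 0 (\<bar>x \<bullet> w\<bar> - \<bar>k\<bar>)) * g_d w)
      = complex_of_real (1 / (2 * norm x) * (2 * (norm x)\<^sup>2 * exp (- k\<^sup>2 / (norm x)\<^sup>2)))"
    by (simp only: integral_comp_inner_g_d[OF False hinge_meas hinge_bound]
        integral_hinge_gauss[OF zero_less_norm_iff[THEN iffD2, OF False]])
  then show ?thesis
    using False by (simp add: G_d_def power2_eq_square)
qed

end
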